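(* Let $d\ge 2$ and let $\mathcal D\subseteq\mathbb S_1^{d-1}$ have non-empty interior. Then for every $M\in G$ and $t\in(0,1)$ the set $\mathcal Q_{\mathcal D}(M,t)$ is non-empty and the minimum defining $F_{\mathcal D}(M,t)$ exists and is positive; moreover $F_{\mathcal D}(\gamma M,t)=F_{\mathcal D}(M,t)$ for all $\gamma\in\Gamma$. Hence $F_{\mathcal D}$ is a well-defined function $\Gamma\backslash G\times(0,1)\to\mathbb R_{>0}$.
   Context: $G=\mathrm{SL}(d+1,\mathbb R)$, $\Gamma=\mathrm{SL}(d+1,\mathbb Z)$. Elements of $\mathbb R^{d+1}$ are row vectors $(u,\vec v)$, $u\in\mathbb R$, $\vec v\in\mathbb R^d$; $\mathbb Z^{d+1}M=\{\vec mM:\vec m\in\mathbb Z^{d+1}\}$. For $t\in(0,1)$, $\mathcal Q_{\mathcal D}(M,t)=\{(u,\vec v)\in\mathbb Z^{d+1}M : -t<u<1-t,\ \vec v\in\mathbb R_{>0}\mathcal D\}$ and $F_{\mathcal D}(M,t)=\min\{|\vec v| : (u,\vec v)\in\mathcal Q_{\mathcal D}(M,t)\}$ (Euclidean norm). *)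

theory Defs
  imports "HOL-Analysis.Analysis"
begin

text \<open>Vectors of R^(d+1) are indexed by 'n option, where CARD('n) = d:
  coordinate None is u, coordinates Some i form the vector v in R^d.\<close>

definition upart :: "real ^ ('n::finite option) \<Rightarrow> real" where
  "upart w = w $ None"

definition vpart :: "real ^ ('n::finite option) \<Rightarrow> real ^ 'n" where
  "vpart w = (\<chi> i. w $ Some i)"

definition int_vec :: "real ^ 'm::finite \<Rightarrow> bool" where
  "int_vec m \<longleftrightarrow> (\<forall>i. m $ i \<in> \<int>)"

definition int_mat :: "real ^ 'm::finite ^ 'm \<Rightarrow> bool" where
  "int_mat A \<longleftrightarrow> (\<forall>i j. A $ i $ j \<in> \<int>)"

definition lattice :: "real ^ 'm::finite ^ 'm \<Rightarrow> (real ^ 'm) set" where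
  "lattice M = {m v* M | m. int_vec m}"

definition Qset :: "(real ^ 'n) set \<Rightarrow> real ^ ('n::finite option) ^ ('n option) \<Rightarrow> real
    \<Rightarrow> (real ^ ('n option)) set" where
  "Qset D M t = {w \<in> lattice M. - t < upart w \<and> upart w < 1 - t \<and>
       vpart w \<in> {c *\<^sub>R x | c x. c > 0 \<and> x \<in> D}}"

definition Ffun :: "(real ^ 'n) set \<Rightarrow> real ^ ('n::finite option) ^ ('n option) \<Rightarrow> real \<Rightarrow> real" where
  "Ffun D M t = Inf ((\<lambda>w. norm (vpart w)) ` Qset D M t)"

end

theory Submission
  imports Defs
begin

(* Pick a unit vector x in the interior of D and let y = (0, x). Applying Dirichlet's
   simultaneous approximation theorem to the preimage of y under M yields lattice points
   w with w - s y arbitrarily small for some s >= 1; such w has u near 0 and v pointing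
   almost along x, so w lies in Q_D(M, t). Since the lattice is discrete, only finitely many
   points of Q_D(M, t) have |v| below a given bound, so the minimum exists, and it is
   positive because D avoids 0. An integral gamma with det gamma = 1 has an integral inverse
   by Cramer's rule, so Z^(d+1) gamma M = Z^(d+1) M and F_D is unchanged. *)

lemma Ints_det: "int_mat A \<Longrightarrow> det A \<in> \<int>"
  unfolding det_def int_mat_def by (intro Ints_sum Ints_mult Ints_prod) auto

lemma int_vec_vector_matrix_mult: "int_vec m \<Longrightarrow> int_mat A \<Longrightarrow> int_vec (m v* A)"
  unfolding int_vec_def int_mat_def vector_matrix_mult_def by (auto intro!: Ints_mult)

lemma int_vec_if_unimodular_image:
  fixes A :: "real ^ 'm::finite ^ 'm"
  assumes "int_mat A" "\<bar>det A\<bar> = 1" "int_vec (x v* A)"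
  shows "int_vec x"
  unfolding int_vec_def
proof
  fix k
  have "x $ k * det A = det (\<chi> i j. if j = k then (x v* A) $ i else transpose A $ i $ j)"
    using cramer_lemma[where A = "transpose A" and k = k and x = x]
    unfolding transpose_matrix_vector det_transpose by simp
  also have "\<dots> \<in> \<int>"
    using assms(1,3) by (intro Ints_det) (auto simp: int_mat_def int_vec_def transpose_def)
  finally have "x $ k * det A * det A \<in> \<int>"
    using Ints_det[OF assms(1)] by (rule Ints_mult)
  moreover have "det A * det A = 1"
    using assms(2) by (metis abs_mult_self_eq mult_1_right)
  ultimately show "x $ k \<in> \<int>"
    by (simp add: mult.assoc)
qed

lemma lattice_mult_subset:
  assumes "int_mat A"
  shows "lattice (A ** M) \<subseteq> lattice M"
proof
  fix w assume "w \<in> lattice (A ** M)"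
  then obtain m where "int_vec m" "w = (m v* A) v* M"
    unfolding lattice_def by (auto simp: vector_matrix_mul_assoc)
  then show "w \<in> lattice M"
    unfolding lattice_def using assms int_vec_vector_matrix_mult by blast
qed

lemma lattice_unimodular_mult:
  fixes A M :: "real ^ 'm::finite ^ 'm"
  assumes "int_mat A" "\<bar>det A\<bar> = 1"
  shows "lattice (A ** M) = lattice M"
proof
  show "lattice (A ** M) \<subseteq> lattice M"
    using assms(1) by (rule lattice_mult_subset)
next
  show "lattice M \<subseteq> lattice (A ** M)"
  proof
    fix w assume "w \<in> lattice M"
    then obtain m where m: "int_vec m" "w = m v* M"
      unfolding lattice_def by blast
    obtain B where "B ** A = mat 1"
      using assms(2) invertible_det_nz invertible_def by fastforce
    then have xA: "(m v* B) v* A = m"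
      by (simp add: vector_matrix_mul_assoc)
    have "int_vec (m v* B)"
      using assms by (rule int_vec_if_unimodular_image) (simp add: xA m(1))
    moreover have "w = (m v* B) v* (A ** M)"
      using m(2) xA by (simp add: vector_matrix_mul_assoc[symmetric])
    ultimately show "w \<in> lattice (A ** M)"
      unfolding lattice_def by blast
  qed
qed

lemma finite_vectors:
  assumes "\<And>i. finite (B i)"
  shows "finite {V :: 'a ^ 'n::finite. \<forall>i. V $ i \<in> B i}"
proof -
  have "{V :: 'a ^ 'n. \<forall>i. V $ i \<in> B i} = vec_nth -` Pi\<^sub>E UNIV B"
    by auto
  then show ?thesis
    using assms by (simp add: finite_vimageI inj_on_def vec_eq_iff finite_PiE)
qed

lemma finite_int_vec_cball: "finite {m :: real ^ 'n::finite. int_vec m \<and> norm m \<le> R}"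
proof (rule finite_subset)
  show "{m :: real ^ 'n. int_vec m \<and> norm m \<le> R} \<subseteq> {m. \<forall>i. m $ i \<in> {k. k \<in> \<int> \<and> \<bar>k\<bar> \<le> R}}"
    unfolding int_vec_def using component_le_norm_cart order_trans by blast
  show "finite {m :: real ^ 'n. \<forall>i. m $ i \<in> {k. k \<in> \<int> \<and> \<bar>k\<bar> \<le> R}}"
    by (intro finite_vectors finite_abs_int_segment)
qed

lemma linear_vector_matrix_mult: "linear (\<lambda>x. x v* (A :: real ^ 'n::finite ^ 'm::finite))"
  using matrix_vector_mul_linear[of "transpose A"] by simp

lemma finite_lattice_cball:
  fixes M :: "real ^ 'n::finite ^ 'n"
  assumes "det M \<noteq> 0"
  shows "finite {w \<in> lattice M. norm w \<le> R}"
proof -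
  obtain N where N: "M ** N = mat 1"
    using assms invertible_det_nz invertible_def by fastforce
  obtain C where C: "C > 0" "\<And>w. norm (w v* N) \<le> C * norm w"
    using linear_bounded_pos[OF linear_vector_matrix_mult] by blast
  have "{w \<in> lattice M. norm w \<le> R} \<subseteq> (\<lambda>m. m v* M) ` {m. int_vec m \<and> norm m \<le> C * R}"
  proof
    fix w assume "w \<in> {w \<in> lattice M. norm w \<le> R}"
    then obtain m where m: "int_vec m" "w = m v* M" "norm w \<le> R"
      unfolding lattice_def by auto
    have "m = w v* N"
      using m(2) N by (simp add: vector_matrix_mul_assoc)
    then have "norm m \<le> C * R"
      using C m(3) by (metis mult_left_mono order_trans less_imp_le)
    then show "w \<in> (\<lambda>m. m v* M) ` {m. int_vec m \<and> norm m \<le> C * R}"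
      using m by blast
  qed
  then show ?thesis
    using finite_int_vec_cball finite_subset by blast
qed

lemma ex_min_if_finite_sublevel:
  fixes f :: "'a \<Rightarrow> 'b::linorder"
  assumes "a \<in> S" "finite {x \<in> S. f x \<le> f a}"
  shows "\<exists>x\<in>S. \<forall>y\<in>S. f x \<le> f y"
proof -
  obtain x where x: "is_arg_min f (\<lambda>x. x \<in> {x \<in> S. f x \<le> f a}) x"
    using ex_is_arg_min_if_finite[OF assms(2)] assms(1) by blast
  then have "x \<in> S" "f x \<le> f a"
    by (simp_all add: is_arg_min_def)
  moreover have "f x \<le> f y" if "y \<in> S" for y
    using x that \<open>f x \<le> f a\<close> by (cases "f y \<le> f a") (auto simp: is_arg_min_linorder)
  ultimately show ?thesis
    by blast
qed

lemma norm_upart_vpart: "(norm w)\<^sup>2 = (upart w)\<^sup>2 + (norm (vpart w))\<^sup>2"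
proof -
  have "(UNIV :: 'n::finite option set) = insert None (Some ` UNIV)"
    by (metis UNIV_option_conv)
  then show ?thesis
    unfolding power2_norm_eq_inner inner_vec_def upart_def vpart_def
    by (subst (1) \<open>UNIV = _\<close>) (simp add: sum.reindex power2_eq_square)
qed

lemma norm_le_upart_plus_vpart: "norm w \<le> \<bar>upart w\<bar> + norm (vpart w)"
proof (rule power2_le_imp_le)
  show "(norm w)\<^sup>2 \<le> (\<bar>upart w\<bar> + norm (vpart w))\<^sup>2"
    unfolding norm_upart_vpart by (simp add: power2_eq_square algebra_simps)
qed simp

lemma abs_upart_le_norm: "\<bar>upart w\<bar> \<le> norm w"
  by (metis norm_upart_vpart abs_le_square_iff abs_norm_cancel le_add_same_cancel1 zero_le_power2)

lemma norm_vpart_le_norm: "norm (vpart w) \<le> norm w"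
  by (metis norm_upart_vpart norm_ge_zero power2_le_imp_le le_add_same_cancel2 zero_le_power2)

lemma int_vec_close_to_integer_multiple:
  fixes z :: "real ^ 'n::finite" and K :: nat
  assumes "K > 0"
  obtains m q where "int_vec m" "q \<ge> 1" "\<And>i. \<bar>q * z $ i - m $ i\<bar> < 1 / K"
proof -
  obtain h where h: "bij_betw h {0..<CARD('n)} (UNIV :: 'n set)"
    using ex_bij_betw_nat_finite[of "UNIV :: 'n set"] by auto
  obtain q p where q: "0 < q" and p: "\<And>k. k < CARD('n) \<Longrightarrow> \<bar>of_int q * z $ h k - of_int (p k)\<bar> < 1 / K"
    using Dirichlet_approx_simult[OF assms, where \<theta> = "\<lambda>k. z $ h k" and n = "CARD('n)"] by blast
  define m :: "real ^ 'n" where "m = (\<chi> i. of_int (p (inv_into {0..<CARD('n)} h i)))"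
  have "\<bar>of_int q * z $ i - m $ i\<bar> < 1 / K" for i
  proof -
    define k where "k = inv_into {0..<CARD('n)} h i"
    have i: "i \<in> h ` {0..<CARD('n)}"
      using h by (simp add: bij_betw_def)
    have "k < CARD('n)" "h k = i"
      unfolding k_def using inv_into_into[OF i] f_inv_into_f[OF i] by simp_all
    then show ?thesis
      using p[of k] by (simp add: m_def flip: k_def)
  qed
  moreover have "int_vec m"
    unfolding int_vec_def m_def by simp
  ultimately show ?thesis
    using q that[of m "of_int q"] by simp
qed

lemma lattice_near_ray:
  fixes M :: "real ^ 'n::finite ^ 'n"
  assumes "det M \<noteq> 0" "\<epsilon> > 0"
  obtains w s where "w \<in> lattice M" "s \<ge> 1" "norm (w - s *\<^sub>R y) < \<epsilon>"
proof -
  obtain M' where "M' ** M = mat 1"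
    using assms(1) invertible_det_nz invertible_def by fastforce
  then have preimage: "(y v* M') v* M = y"
    by (simp add: vector_matrix_mul_assoc)
  obtain C where C: "C > 0" "\<And>x. norm (x v* M) \<le> C * norm x"
    using linear_bounded_pos[OF linear_vector_matrix_mult] by blast
  obtain K :: nat where K_large: "C * CARD('n) / \<epsilon> < K"
    using reals_Archimedean2 by blast
  moreover have "C * CARD('n) / \<epsilon> > 0"
    using assms(2) C(1) by simp
  ultimately have K_pos: "real K > 0"
    by linarith
  then have K: "K > 0" "C * CARD('n) / K < \<epsilon>"
    using K_large assms(2) by (simp_all add: pos_divide_less_eq mult.commute)
  obtain m q where m: "int_vec m" "q \<ge> 1" "\<And>i. \<bar>q * (y v* M') $ i - m $ i\<bar> < 1 / K"
    using int_vec_close_to_integer_multiple[OF K(1)] by blast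
  have "norm (q *\<^sub>R (y v* M') - m) \<le> (\<Sum>i\<in>UNIV. \<bar>(q *\<^sub>R (y v* M') - m) $ i\<bar>)"
    by (rule norm_le_l1_cart)
  also have "\<dots> \<le> (\<Sum>i\<in>(UNIV :: 'n set). 1 / K)"
    using m(3) by (intro sum_mono) (simp add: less_imp_le)
  finally have close: "norm (q *\<^sub>R (y v* M') - m) \<le> CARD('n) / K"
    by simp
  have "(q *\<^sub>R (y v* M') - m) v* M = q *\<^sub>R y - m v* M"
    by (simp only: vector_matrix_mult_diff_distrib scaleR_vector_matrix_assoc preimage)
  then have "norm (m v* M - q *\<^sub>R y) \<le> C * norm (q *\<^sub>R (y v* M') - m)"
    using C(2)[of "q *\<^sub>R (y v* M') - m"] by (simp add: norm_minus_commute)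
  also have "\<dots> \<le> C * (CARD('n) / K)"
    using C(1) close by (intro mult_left_mono) auto
  also have "\<dots> < \<epsilon>"
    using K(2) by simp
  finally show ?thesis
    using that[of "m v* M" q] m(1,2) unfolding lattice_def by blast
qed

lemma norm_sgn_diff_le:
  fixes v x :: "'a::real_normed_vector"
  assumes "norm x = 1" "s > 0"
  shows "norm (sgn v - x) \<le> 2 * norm (v - s *\<^sub>R x) / s"
proof (cases "v = 0")
  case True
  then show ?thesis
    using assms by simp
next
  case False
  have "norm (sgn v - (1 / s) *\<^sub>R v) = \<bar>1 / norm v - 1 / s\<bar> * norm v"
    by (simp add: sgn_div_norm divide_inverse_commute flip: scaleR_diff_left)
  also have "\<dots> = \<bar>s - norm v\<bar> / s"
    using False assms(2) by (simp add: field_simps)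
  also have "\<dots> \<le> norm (v - s *\<^sub>R x) / s"
    using norm_triangle_ineq3[of v "s *\<^sub>R x"] assms
    by (intro divide_right_mono) (auto simp: abs_minus_commute)
  finally have sgn_close: "norm (sgn v - (1 / s) *\<^sub>R v) \<le> norm (v - s *\<^sub>R x) / s" .
  have "(1 / s) *\<^sub>R v - x = (1 / s) *\<^sub>R (v - s *\<^sub>R x)"
    using assms(2) by (simp add: scaleR_diff_right)
  then have "norm ((1 / s) *\<^sub>R v - x) = norm (v - s *\<^sub>R x) / s"
    using assms(2) by simp
  then show ?thesis
    using norm_triangle_ineq[of "sgn v - (1 / s) *\<^sub>R v" "(1 / s) *\<^sub>R v - x"] sgn_close
    by simp
qed

lemma Qset_memberI:
  assumes "w \<in> lattice M" "- t < upart w" "upart w < 1 - t" "vpart w \<noteq> 0" "sgn (vpart w) \<in> D"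
  shows "w \<in> Qset D M t"
proof -
  have "vpart w = norm (vpart w) *\<^sub>R sgn (vpart w)"
    by (simp add: sgn_div_norm assms(4))
  then show ?thesis
    unfolding Qset_def using assms by fastforce
qed

lemma Qset_vpart_nonzero: "0 \<notin> D \<Longrightarrow> w \<in> Qset D M t \<Longrightarrow> vpart w \<noteq> 0"
  unfolding Qset_def by auto

lemma Qset_unimodular_mult:
  assumes "int_mat A" "\<bar>det A\<bar> = 1"
  shows "Qset D (A ** M) t = Qset D M t"
  unfolding Qset_def lattice_unimodular_mult[OF assms] ..

lemma Qset_nonempty:
  fixes D :: "(real ^ 'n::finite) set" and M :: "real ^ ('n option) ^ ('n option)"
  assumes "det M \<noteq> 0" "0 < t" "t < 1" "norm x = 1" "r > 0"
    and "\<And>y. y \<in> sphere 0 1 \<Longrightarrow> dist y x < r \<Longrightarrow> y \<in> D"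
  shows "Qset D M t \<noteq> {}"
proof -
  define y :: "real ^ ('n option)" where "y = (\<chi> j. case j of None \<Rightarrow> 0 | Some i \<Rightarrow> x $ i)"
  define \<epsilon> where "\<epsilon> = min (min t (1 - t)) (min r 1 / 2)"
  have "\<epsilon> > 0"
    unfolding \<epsilon>_def using assms(2,3,5) by simp
  then obtain w s where w: "w \<in> lattice M" "s \<ge> 1" "norm (w - s *\<^sub>R y) < \<epsilon>"
    using lattice_near_ray[OF assms(1)] by blast
  have "upart (w - s *\<^sub>R y) = upart w" "vpart (w - s *\<^sub>R y) = vpart w - s *\<^sub>R x"
    by (simp_all add: upart_def vpart_def y_def vec_eq_iff)
  then have u: "\<bar>upart w\<bar> < \<epsilon>" and v: "norm (vpart w - s *\<^sub>R x) < \<epsilon>"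
    using w(3) abs_upart_le_norm[of "w - s *\<^sub>R y"] norm_vpart_le_norm[of "w - s *\<^sub>R y"] by simp_all
  have "vpart w \<noteq> 0"
    using v w(2) assms(4) unfolding \<epsilon>_def by auto
  moreover have "norm (sgn (vpart w) - x) < r"
  proof -
    have "norm (sgn (vpart w) - x) \<le> 2 * norm (vpart w - s *\<^sub>R x) / s"
      using assms(4) w(2) by (intro norm_sgn_diff_le) auto
    also have "\<dots> \<le> 2 * norm (vpart w - s *\<^sub>R x)"
      using w(2) mult_right_mono[OF w(2) norm_ge_zero, of "vpart w - s *\<^sub>R x"]
      by (simp add: divide_le_eq mult.commute)
    also have "\<dots> < r"
      using v unfolding \<epsilon>_def by linarith
    finally show ?thesis .
  qed
  ultimately have "sgn (vpart w) \<in> D"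
    using assms(6) by (simp add: norm_sgn dist_norm)
  then have "w \<in> Qset D M t"
    using u \<open>vpart w \<noteq> 0\<close> w(1) unfolding \<epsilon>_def by (intro Qset_memberI) auto
  then show ?thesis
    by blast
qed

lemma Qset_ex_min_norm_vpart:
  assumes "det M \<noteq> 0" "Qset D M t \<noteq> {}"
  shows "\<exists>w\<in>Qset D M t. \<forall>w'\<in>Qset D M t. norm (vpart w) \<le> norm (vpart w')"
proof -
  obtain a where a: "a \<in> Qset D M t"
    using assms(2) by blast
  let ?R = "\<bar>t\<bar> + 1 + norm (vpart a)"
  have "{w \<in> Qset D M t. norm (vpart w) \<le> norm (vpart a)} \<subseteq> {w \<in> lattice M. norm w \<le> ?R}"
  proof safe
    fix w assume w: "w \<in> Qset D M t" "norm (vpart w) \<le> norm (vpart a)"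
    then show "w \<in> lattice M"
      unfolding Qset_def by simp
    have "\<bar>upart w\<bar> \<le> \<bar>t\<bar> + 1"
      using w(1) unfolding Qset_def by auto
    then show "norm w \<le> ?R"
      using norm_le_upart_plus_vpart[of w] w(2) by linarith
  qed
  then have "finite {w \<in> Qset D M t. norm (vpart w) \<le> norm (vpart a)}"
    using finite_lattice_cball[OF assms(1)] by (rule finite_subset)
  then show ?thesis
    by (rule ex_min_if_finite_sublevel[OF a, where f = "\<lambda>w. norm (vpart w)"])
qed

theorem proposition2p1:
  fixes D :: "(real ^ 'n::finite) set"
  assumes d2: "CARD('n) \<ge> 2"
    and Dsph: "D \<subseteq> sphere 0 1"
    and Dint: "\<exists>U. openin (top_of_set (sphere (0::real^'n) 1)) U \<and> U \<noteq> {} \<and> U \<subseteq> D"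
  shows "\<forall>(M :: real ^ ('n option) ^ ('n option)) t. det M = 1 \<and> 0 < t \<and> t < 1 \<longrightarrow>
           Qset D M t \<noteq> {}
         \<and> (\<exists>w\<in>Qset D M t. norm (vpart w) = Ffun D M t
               \<and> (\<forall>w'\<in>Qset D M t. norm (vpart w) \<le> norm (vpart w')))
         \<and> Ffun D M t > 0
         \<and> (\<forall>\<gamma>. det \<gamma> = 1 \<and> int_mat \<gamma> \<longrightarrow> Ffun D (\<gamma> ** M) t = Ffun D M t)"
proof (intro allI impI)
  fix M :: "real ^ ('n option) ^ ('n option)" and t :: real
  assume "det M = 1 \<and> 0 < t \<and> t < 1"
  then have M: "det M \<noteq> 0" and t: "0 < t" "t < 1"
    by auto
  obtain U x where U: "openin (top_of_set (sphere 0 1)) U" "U \<subseteq> D" and "x \<in> U"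
    using Dint by blast
  then obtain r where "r > 0" "\<And>y. y \<in> sphere 0 1 \<Longrightarrow> dist y x < r \<Longrightarrow> y \<in> D"
    unfolding openin_euclidean_subtopology_iff by blast
  moreover have "norm x = 1"
    using \<open>x \<in> U\<close> openin_imp_subset[OF U(1)] by auto
  ultimately have Q: "Qset D M t \<noteq> {}"
    using Qset_nonempty[OF M t] by blast
  then obtain w where w: "w \<in> Qset D M t" and min: "\<forall>w'\<in>Qset D M t. norm (vpart w) \<le> norm (vpart w')"
    using Qset_ex_min_norm_vpart[OF M] by blast
  have F: "Ffun D M t = norm (vpart w)"
    unfolding Ffun_def using w min by (intro cInf_eq_minimum) auto
  have "0 \<notin> D"
    using Dsph by auto
  then have "vpart w \<noteq> 0"
    using Qset_vpart_nonzero w by blast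
  moreover have "Ffun D (\<gamma> ** M) t = Ffun D M t" if "det \<gamma> = 1 \<and> int_mat \<gamma>" for \<gamma>
    using that Qset_unimodular_mult[of \<gamma>] unfolding Ffun_def by simp
  ultimately show "Qset D M t \<noteq> {}
         \<and> (\<exists>w\<in>Qset D M t. norm (vpart w) = Ffun D M t
               \<and> (\<forall>w'\<in>Qset D M t. norm (vpart w) \<le> norm (vpart w')))
         \<and> Ffun D M t > 0
         \<and> (\<forall>\<gamma>. det \<gamma> = 1 \<and> int_mat \<gamma> \<longrightarrow> Ffun D (\<gamma> ** M) t = Ffun D M t)"
    using Q w min F by auto
qed

end
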